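(* Let $n$ and $m$ be integers with $n\geq 2$ and $1\leq m\leq\binom{n}{2}$, and let $n'=\min\{\lfloor\frac{m+3}{2}\rfloor,n\}$. A two-terminal graph $G\in T_{n,m}$ is a $2$-uniformly most reliable two-terminal graph ($2$-UMRTTG) if and only if $G$ contains $A_{n',0}$ as a subgraph (as a two-terminal graph, i.e. with terminals corresponding to terminals).
   Context: All graphs are finite, simple and undirected. A two-terminal graph is a graph $G$ together with two distinguished vertices $s,t$ (the terminals). Two two-terminal graphs are isomorphic if there is a graph isomorphism between them mapping the set of terminals onto the set of terminals. $T_{n,m}$ denotes the set of all pairwise nonisomorphic two-terminal graphs with $n$ vertices and $m$ edges. For a positive integer $d$, a $d$-pathset of a two-terminal graph $G$ is a spanning subgraph of $G$ containing a path of length (number of edges) at most $d$ joining $s$ and $t$. For $\rho\in[0,1]$, $R_G^d(\rho)$ is the probability that the random spanning subgraph obtained from $G$ by deleting each edge independently with probability $\rho$ is a $d$-pathset. A graph $G\in T_{n,m}$ is a $d$-UMRTTG if $R_G^d(\rho)\geq R_H^d(\rho)$ for every $H\in T_{n,m}$ and every $\rho\in[0,1]$. For an integer $k\geq 2$, $A_{k,0}$ is the two-terminal graph with vertex set $\{s,t,v_3,\ldots,v_k\}$, terminals $s,t$, and edge set $\{st\}\cup\{sv_i,v_it:3\leq i\leq k\}$ (so $A_{2,0}$ is the single edge $st$). *)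

theory Defs
  imports Main "HOL-Analysis.Analysis"
begin

definition two_terminal_graph :: "'a set \<Rightarrow> 'a set set \<Rightarrow> 'a \<Rightarrow> 'a \<Rightarrow> bool" where
  "two_terminal_graph V E s t \<longleftrightarrow>
     finite V \<and> E \<subseteq> {{u, v} | u v. u \<in> V \<and> v \<in> V \<and> u \<noteq> v} \<and>
     s \<in> V \<and> t \<in> V \<and> s \<noteq> t"

definition is_path :: "'a set set \<Rightarrow> 'a list \<Rightarrow> bool" where
  "is_path F xs \<longleftrightarrow> xs \<noteq> [] \<and> distinct xs \<and>
     (\<forall>i. Suc i < length xs \<longrightarrow> {xs ! i, xs ! Suc i} \<in> F)"

definition d_pathset :: "nat \<Rightarrow> 'a set set \<Rightarrow> 'a \<Rightarrow> 'a \<Rightarrow> bool" where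
  "d_pathset d F s t \<longleftrightarrow>
     (\<exists>xs. is_path F xs \<and> hd xs = s \<and> last xs = t \<and> length xs - 1 \<le> d)"

text \<open>Probability that deleting each edge independently with probability rho
  leaves a d-pathset.\<close>
definition rel :: "nat \<Rightarrow> 'a set set \<Rightarrow> 'a \<Rightarrow> 'a \<Rightarrow> real \<Rightarrow> real" where
  "rel d E s t \<rho> =
     (\<Sum>F \<in> {F. F \<subseteq> E \<and> d_pathset d F s t}.
        (1 - \<rho>) ^ card F * \<rho> ^ card (E - F))"

definition UMRTTG :: "nat \<Rightarrow> 'a set \<Rightarrow> 'a set set \<Rightarrow> 'a \<Rightarrow> 'a \<Rightarrow> bool" where
  "UMRTTG d V E s t \<longleftrightarrow>
     (\<forall>(V'::'a set) E' s' t'. two_terminal_graph V' E' s' t' \<and> card V' = card V \<and> card E' = card E \<longrightarrow>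
        (\<forall>\<rho>::real. 0 \<le> \<rho> \<and> \<rho> \<le> 1 \<longrightarrow> rel d E s t \<rho> \<ge> rel d E' s' t' \<rho>))"

text \<open>A_{k,0} on vertex set {0..<k}, terminals s = 0, t = 1, inner vertices 2..k-1
  (corresponding to v_3..v_k).\<close>
definition A_verts :: "nat \<Rightarrow> nat set" where
  "A_verts k = {0..<k}"

definition A_edges :: "nat \<Rightarrow> nat set set" where
  "A_edges k = insert {0, 1} ({{0, i} | i. 2 \<le> i \<and> i < k} \<union> {{i, 1} | i. 2 \<le> i \<and> i < k})"

definition contains_tt ::
  "'a set \<Rightarrow> 'a set set \<Rightarrow> 'a \<Rightarrow> 'a \<Rightarrow> 'b set \<Rightarrow> 'b set set \<Rightarrow> 'b \<Rightarrow> 'b \<Rightarrow> bool" where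
  "contains_tt V E s t VH EH sH tH \<longleftrightarrow>
     (\<exists>f. inj_on f VH \<and> f ` VH \<subseteq> V \<and> (\<forall>e \<in> EH. f ` e \<in> E) \<and> {f sH, f tH} = {s, t})"

end

(*
  A spanning subgraph F joins s and t by a path of length at most 2 iff it keeps the edge st
  or both edges sv and vt for a common neighbour v of the terminals. These k + 1 events concern
  pairwise disjoint sets of edges, so R_G(rho) = 1 - rho^[st in E] * (1 - (1 - rho)^2)^k, where k
  is the number of common neighbours of s and t. In T_{n,m} one has [st in E] + 2k <= m and
  k <= n - 2, hence k + [st in E] <= n' - 1. The polynomial is therefore maximised, for every rho
  simultaneously, by st in E together with k = n' - 2, a pair realised by some graph of T_{n,m};
  at rho = 1/2 every other admissible pair is strictly worse. Finally, st in E and k >= n' - 2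
  says precisely that G contains A_{n',0}.
*)
theory Submission
  imports Defs
begin

definition subset_weight :: "real \<Rightarrow> 'e set \<Rightarrow> 'e set \<Rightarrow> real" where
  "subset_weight \<rho> A F = (1 - \<rho>) ^ card F * \<rho> ^ card (A - F)"

lemma sum_subset_weight_eq_1:
  assumes "finite A"
  shows "(\<Sum>F\<in>Pow A. subset_weight \<rho> A F) = 1"
proof -
  have "(\<Sum>F\<in>Pow A. subset_weight \<rho> A F) = (\<Prod>x\<in>A. (1 - \<rho>) + \<rho>)"
    unfolding prod_add[OF assms] subset_weight_def by simp
  then show ?thesis by simp
qed

lemma card_Un_Int_split:
  assumes "finite A" "finite B" "A \<inter> B = {}" "F \<subseteq> A \<union> B"
  shows "card F = card (F \<inter> A) + card (F \<inter> B)"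
proof -
  have "card F = card ((F \<inter> A) \<union> (F \<inter> B))"
    using assms(4) by (simp add: Int_Un_distrib[symmetric] Int_absorb2)
  also have "\<dots> = card (F \<inter> A) + card (F \<inter> B)"
    using assms(1-3) by (intro card_Un_disjoint) auto
  finally show ?thesis .
qed

lemma subset_weight_Un:
  assumes "finite A" "finite B" "A \<inter> B = {}" "F \<subseteq> A \<union> B"
  shows "subset_weight \<rho> (A \<union> B) F = subset_weight \<rho> A (F \<inter> A) * subset_weight \<rho> B (F \<inter> B)"
proof -
  have "card F = card (F \<inter> A) + card (F \<inter> B)"
    using assms by (rule card_Un_Int_split)
  moreover have "card (A \<union> B - F) = card (A - F \<inter> A) + card (B - F \<inter> B)"
    using assms(1-3) card_Un_Int_split[of A B "A \<union> B - F"] by (simp add: Diff_Int_distrib2 Int_Diff)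
  ultimately show ?thesis
    unfolding subset_weight_def by (simp add: power_add mult_ac)
qed

lemma sum_subset_weight_Un:
  fixes \<phi> \<psi> :: "'e set \<Rightarrow> real"
  assumes "finite A" "finite B" "A \<inter> B = {}"
  shows "(\<Sum>F\<in>Pow (A \<union> B). subset_weight \<rho> (A \<union> B) F * \<phi> (F \<inter> A) * \<psi> (F \<inter> B))
       = (\<Sum>X\<in>Pow A. subset_weight \<rho> A X * \<phi> X) * (\<Sum>Y\<in>Pow B. subset_weight \<rho> B Y * \<psi> Y)"
proof -
  have "(\<Sum>F\<in>Pow (A \<union> B). subset_weight \<rho> (A \<union> B) F * \<phi> (F \<inter> A) * \<psi> (F \<inter> B))
      = (\<Sum>(X, Y)\<in>Pow A \<times> Pow B. (subset_weight \<rho> A X * \<phi> X) * (subset_weight \<rho> B Y * \<psi> Y))"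
    by (rule sum.reindex_bij_witness[where j = "\<lambda>F. (F \<inter> A, F \<inter> B)" and i = "\<lambda>(X, Y). X \<union> Y"])
      (use assms in \<open>auto simp: subset_weight_Un Int_absorb2 Un_Int_distrib2\<close>)
  then show ?thesis
    by (simp add: sum_product sum.cartesian_product case_prod_unfold)
qed

lemma sum_subset_weight_UN:
  fixes \<phi> :: "'v \<Rightarrow> 'e set \<Rightarrow> real"
  assumes "finite C" "\<And>v. v \<in> C \<Longrightarrow> finite (p v)" "disjoint_family_on p C"
  shows "(\<Sum>F\<in>Pow (\<Union>(p ` C)). subset_weight \<rho> (\<Union>(p ` C)) F * (\<Prod>v\<in>C. \<phi> v (F \<inter> p v)))
       = (\<Prod>v\<in>C. \<Sum>G\<in>Pow (p v). subset_weight \<rho> (p v) G * \<phi> v G)"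
  using assms
proof (induction C rule: finite_induct)
  case empty
  then show ?case by (simp add: subset_weight_def)
next
  case (insert c C)
  let ?B = "\<Union>(p ` C)"
  have disj: "p c \<inter> ?B = {}"
    using insert.hyps(2) insert.prems(2) by (fastforce simp: disjoint_family_on_def)
  have "(\<Prod>v\<in>insert c C. \<phi> v (F \<inter> p v)) = \<phi> c (F \<inter> p c) * (\<Prod>v\<in>C. \<phi> v (F \<inter> ?B \<inter> p v))" for F
  proof -
    have "F \<inter> ?B \<inter> p v = F \<inter> p v" if "v \<in> C" for v
      using that by blast
    then show ?thesis
      using insert.hyps by simp
  qed
  then have "(\<Sum>F\<in>Pow (\<Union>(p ` insert c C)). subset_weight \<rho> (\<Union>(p ` insert c C)) F
        * (\<Prod>v\<in>insert c C. \<phi> v (F \<inter> p v)))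
      = (\<Sum>F\<in>Pow (p c \<union> ?B). subset_weight \<rho> (p c \<union> ?B) F * \<phi> c (F \<inter> p c)
        * (\<Prod>v\<in>C. \<phi> v (F \<inter> ?B \<inter> p v)))"
    by (simp add: mult.assoc)
  also have "\<dots> = (\<Sum>G\<in>Pow (p c). subset_weight \<rho> (p c) G * \<phi> c G)
      * (\<Sum>F\<in>Pow ?B. subset_weight \<rho> ?B F * (\<Prod>v\<in>C. \<phi> v (F \<inter> p v)))"
    using insert.hyps(1) insert.prems disj by (intro sum_subset_weight_Un) auto
  also have "\<dots> = (\<Prod>v\<in>insert c C. \<Sum>G\<in>Pow (p v). subset_weight \<rho> (p v) G * \<phi> v G)"
    using insert by (simp add: disjoint_family_on_mono[of C "insert c C"] subset_insertI)
  finally show ?case .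
qed

lemma sum_subset_weight_not_superset:
  assumes "finite B"
  shows "(\<Sum>G\<in>Pow B. subset_weight \<rho> B G * of_bool (\<not> B \<subseteq> G)) = 1 - (1 - \<rho>) ^ card B"
proof -
  have "(\<Sum>G\<in>Pow B. subset_weight \<rho> B G * of_bool (\<not> B \<subseteq> G))
      = (\<Sum>G\<in>Pow B. subset_weight \<rho> B G) - (\<Sum>G\<in>Pow B. if B = G then subset_weight \<rho> B G else 0)"
    by (subst sum_subtractf[symmetric], rule sum.cong) auto
  also have "\<dots> = 1 - subset_weight \<rho> B B"
    using assms by (simp add: sum_subset_weight_eq_1)
  finally show ?thesis by (simp add: subset_weight_def)
qed

lemma sum_subset_weight_not_mem:
  assumes "finite A"
  shows "(\<Sum>F\<in>Pow A. subset_weight \<rho> A F * of_bool (e \<notin> F)) = (if e \<in> A then \<rho> else 1)"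
proof (cases "e \<in> A")
  case True
  then have A: "A = {e} \<union> (A - {e})" by blast
  have "(\<Sum>F\<in>Pow A. subset_weight \<rho> A F * of_bool (e \<notin> F))
      = (\<Sum>F\<in>Pow ({e} \<union> (A - {e})). subset_weight \<rho> ({e} \<union> (A - {e})) F
           * of_bool (e \<notin> F \<inter> {e}) * (\<lambda>_. 1) (F \<inter> (A - {e})))"
    by (simp only: A[symmetric]) (rule sum.cong, auto)
  also have "\<dots> = (\<Sum>X\<in>Pow {e}. subset_weight \<rho> {e} X * of_bool (e \<notin> X))"
    using assms sum_subset_weight_eq_1[of "A - {e}"] by (subst sum_subset_weight_Un) auto
  finally show ?thesis
    using True by (simp add: Pow_insert subset_weight_def)
next
  case False
  then have "(\<Sum>F\<in>Pow A. subset_weight \<rho> A F * of_bool (e \<notin> F)) = (\<Sum>F\<in>Pow A. subset_weight \<rho> A F)"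
    by (intro sum.cong) auto
  then show ?thesis
    using False sum_subset_weight_eq_1[OF assms] by simp
qed

lemma prod_of_bool:
  "finite A \<Longrightarrow> (\<Prod>x\<in>A. of_bool (P x) :: 'b :: comm_semiring_1) = of_bool (\<forall>x\<in>A. P x)"
  by (induction A rule: finite_induct) auto

lemma sum_subset_weight_no_block_survives:
  assumes "finite C" "\<And>v. v \<in> C \<Longrightarrow> finite (p v)" "disjoint_family_on p C"
  shows "(\<Sum>F\<in>Pow (\<Union>(p ` C)). subset_weight \<rho> (\<Union>(p ` C)) F * of_bool (\<forall>v\<in>C. \<not> p v \<subseteq> F))
       = (\<Prod>v\<in>C. 1 - (1 - \<rho>) ^ card (p v))"
proof -
  have "of_bool (\<forall>v\<in>C. \<not> p v \<subseteq> F) = (\<Prod>v\<in>C. of_bool (\<not> p v \<subseteq> F \<inter> p v) :: real)" for F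
    using assms(1) by (simp add: prod_of_bool)
  then have "(\<Sum>F\<in>Pow (\<Union>(p ` C)). subset_weight \<rho> (\<Union>(p ` C)) F * of_bool (\<forall>v\<in>C. \<not> p v \<subseteq> F))
      = (\<Prod>v\<in>C. \<Sum>G\<in>Pow (p v). subset_weight \<rho> (p v) G * of_bool (\<not> p v \<subseteq> G))"
    using assms by (simp only:) (rule sum_subset_weight_UN)
  also have "\<dots> = (\<Prod>v\<in>C. 1 - (1 - \<rho>) ^ card (p v))"
    using assms(2) by (intro prod.cong refl sum_subset_weight_not_superset)
  finally show ?thesis .
qed

lemma two_terminal_graph_edgeD:
  assumes "two_terminal_graph V E s t" "{a, b} \<in> E"
  shows "a \<noteq> b" "a \<in> V" "b \<in> V"
proof -
  obtain u v where "{a, b} = {u, v}" "u \<in> V" "v \<in> V" "u \<noteq> v"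
    using assms unfolding two_terminal_graph_def by blast
  then show "a \<noteq> b" "a \<in> V" "b \<in> V"
    by (auto simp: doubleton_eq_iff)
qed

lemma finite_edges_two_terminal_graph:
  assumes "two_terminal_graph V E s t"
  shows "finite E"
proof -
  have "E \<subseteq> Pow V" "finite V"
    using assms unfolding two_terminal_graph_def by auto
  then show ?thesis
    by (meson finite_Pow_iff finite_subset)
qed

lemma is_path_singleton [simp]: "is_path F [x]"
  unfolding is_path_def by simp

lemma is_path_Cons_Cons [simp]:
  "is_path F (x # y # xs) \<longleftrightarrow> x \<notin> set (y # xs) \<and> {x, y} \<in> F \<and> is_path F (y # xs)"
proof -
  have "(\<forall>i. Suc i < length (x # y # xs) \<longrightarrow> {(x # y # xs) ! i, (x # y # xs) ! Suc i} \<in> F)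
    \<longleftrightarrow> {x, y} \<in> F \<and> (\<forall>i. Suc i < length (y # xs) \<longrightarrow> {(y # xs) ! i, (y # xs) ! Suc i} \<in> F)"
    by (simp add: All_less_Suc2)
  then show ?thesis
    unfolding is_path_def by auto
qed

lemma d_pathset_2_iff:
  assumes "s \<noteq> t"
  shows "d_pathset 2 F s t \<longleftrightarrow> {s, t} \<in> F \<or> (\<exists>v. v \<notin> {s, t} \<and> {s, v} \<in> F \<and> {v, t} \<in> F)"
proof
  assume "d_pathset 2 F s t"
  then obtain xs where xs: "is_path F xs" "hd xs = s" "last xs = t" "length xs \<le> 3"
    unfolding d_pathset_def by auto
  then have "xs \<noteq> []"
    unfolding is_path_def by simp
  then have "(\<exists>x. xs = [x]) \<or> (\<exists>x y. xs = [x, y]) \<or> (\<exists>x y z. xs = [x, y, z])"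
    using xs(4) by (auto simp: length_Suc_conv numeral_eq_Suc le_Suc_eq)
  then show "{s, t} \<in> F \<or> (\<exists>v. v \<notin> {s, t} \<and> {s, v} \<in> F \<and> {v, t} \<in> F)"
    using xs assms by auto
next
  assume "{s, t} \<in> F \<or> (\<exists>v. v \<notin> {s, t} \<and> {s, v} \<in> F \<and> {v, t} \<in> F)"
  then show "d_pathset 2 F s t"
  proof (elim disjE exE)
    assume "{s, t} \<in> F"
    then have "is_path F [s, t]"
      using assms by simp
    then show ?thesis
      unfolding d_pathset_def by (intro exI[of _ "[s, t]"]) simp
  next
    fix v assume "v \<notin> {s, t} \<and> {s, v} \<in> F \<and> {v, t} \<in> F"
    then have "is_path F [s, v, t]"
      using assms by auto
    then show ?thesis
      unfolding d_pathset_def by (intro exI[of _ "[s, v, t]"]) simp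
  qed
qed

definition common_nbrs :: "'a set set \<Rightarrow> 'a \<Rightarrow> 'a \<Rightarrow> 'a set" where
  "common_nbrs E s t = {v. {s, v} \<in> E \<and> {v, t} \<in> E}"

lemma common_nbrs_subset:
  assumes "two_terminal_graph V E s t"
  shows "common_nbrs E s t \<subseteq> V - {s, t}"
  using two_terminal_graph_edgeD[OF assms] unfolding common_nbrs_def by blast

lemma finite_common_nbrs:
  assumes "two_terminal_graph V E s t"
  shows "finite (common_nbrs E s t)"
  using common_nbrs_subset[OF assms] assms unfolding two_terminal_graph_def
  by (meson finite_Diff finite_subset)

lemma common_nbr_path_edges:
  assumes "two_terminal_graph V E s t" "v \<in> common_nbrs E s t"
  shows "{{s, v}, {v, t}} \<subseteq> E" "card {{s, v}, {v, t}} = 2" "{s, t} \<notin> {{s, v}, {v, t}}"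
  using assms common_nbrs_subset[OF assms(1)] unfolding common_nbrs_def two_terminal_graph_def
  by (auto simp: doubleton_eq_iff)

lemma disjoint_family_common_nbr_path_edges:
  assumes "two_terminal_graph V E s t"
  shows "disjoint_family_on (\<lambda>v. {{s, v}, {v, t}}) (common_nbrs E s t)"
  using common_nbrs_subset[OF assms] assms unfolding disjoint_family_on_def two_terminal_graph_def
  by (auto simp: doubleton_eq_iff)

lemma d_pathset_2_iff_common_nbrs:
  assumes G: "two_terminal_graph V E s t" and "F \<subseteq> E"
  shows "d_pathset 2 F s t \<longleftrightarrow> {s, t} \<in> F \<or> (\<exists>v\<in>common_nbrs E s t. {{s, v}, {v, t}} \<subseteq> F)"
proof -
  have "s \<noteq> t"
    using G unfolding two_terminal_graph_def by simp
  moreover have "v \<notin> {s, t}" if "v \<in> common_nbrs E s t" for v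
    using common_nbrs_subset[OF G] that by blast
  ultimately show ?thesis
    using \<open>F \<subseteq> E\<close> unfolding d_pathset_2_iff[OF \<open>s \<noteq> t\<close>] common_nbrs_def by auto
qed

lemma rel_eq_1_minus_failure:
  assumes "finite E"
  shows "rel d E s t \<rho> = 1 - (\<Sum>F\<in>Pow E. subset_weight \<rho> E F * of_bool (\<not> d_pathset d F s t))"
proof -
  have "(\<Sum>F\<in>Pow E. subset_weight \<rho> E F * of_bool (\<not> d_pathset d F s t))
      = (\<Sum>F\<in>Pow E. subset_weight \<rho> E F) - (\<Sum>F\<in>Pow E. subset_weight \<rho> E F * of_bool (d_pathset d F s t))"
    by (subst sum_subtractf[symmetric]) (auto intro: sum.cong)
  also have "(\<Sum>F\<in>Pow E. subset_weight \<rho> E F * of_bool (d_pathset d F s t)) = rel d E s t \<rho>"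
    unfolding rel_def subset_weight_def using assms by (simp add: Collect_conj_eq Pow_def[symmetric])
  finally show ?thesis
    using sum_subset_weight_eq_1[OF assms] by simp
qed

definition rel_2_poly :: "bool \<Rightarrow> nat \<Rightarrow> real \<Rightarrow> real" where
  "rel_2_poly b k \<rho> = 1 - (if b then \<rho> else 1) * (1 - (1 - \<rho>) ^ 2) ^ k"

lemma rel_2_eq:
  assumes G: "two_terminal_graph V E s t"
  shows "rel 2 E s t \<rho> = rel_2_poly ({s, t} \<in> E) (card (common_nbrs E s t)) \<rho>"
proof -
  define C where "C = common_nbrs E s t"
  define p where "p v = {{s, v}, {v, t}}" for v
  define P where "P = \<Union>(p ` C)"
  define X where "X = E - P"
  have fin: "finite E" "finite X" "finite P" "finite C"
    using finite_edges_two_terminal_graph[OF G] finite_common_nbrs[OF G]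
    unfolding X_def P_def C_def p_def by auto
  have p: "p v \<subseteq> E" "card (p v) = 2" "{s, t} \<notin> p v" if "v \<in> C" for v
    using common_nbr_path_edges[OF G] that unfolding C_def p_def by auto
  have E: "E = X \<union> P" "X \<inter> P = {}"
    using p(1) unfolding X_def P_def by auto
  have fail: "(of_bool (\<not> d_pathset 2 F s t) :: real)
      = of_bool ({s, t} \<notin> F \<inter> X) * of_bool (\<forall>v\<in>C. \<not> p v \<subseteq> F \<inter> P)"
    if "F \<subseteq> E" for F
  proof -
    have "d_pathset 2 F s t \<longleftrightarrow> {s, t} \<in> F \<or> (\<exists>v\<in>C. p v \<subseteq> F)"
      using d_pathset_2_iff_common_nbrs[OF G that] unfolding C_def p_def .
    moreover have "{s, t} \<in> F \<Longrightarrow> {s, t} \<in> X"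
      using \<open>F \<subseteq> E\<close> p(3) unfolding X_def P_def by blast
    moreover have "p v \<subseteq> P" if "v \<in> C" for v
      using that unfolding P_def by blast
    ultimately show ?thesis
      by auto
  qed
  have "(\<Sum>F\<in>Pow E. subset_weight \<rho> E F * of_bool (\<not> d_pathset 2 F s t))
      = (\<Sum>F\<in>Pow (X \<union> P). subset_weight \<rho> (X \<union> P) F * of_bool ({s, t} \<notin> F \<inter> X)
           * of_bool (\<forall>v\<in>C. \<not> p v \<subseteq> F \<inter> P))"
    using fail unfolding E(1)[symmetric] by (intro sum.cong) (auto simp: mult.assoc)
  also have "\<dots> = (\<Sum>G\<in>Pow X. subset_weight \<rho> X G * of_bool ({s, t} \<notin> G))
      * (\<Sum>G\<in>Pow P. subset_weight \<rho> P G * of_bool (\<forall>v\<in>C. \<not> p v \<subseteq> G))"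
    using fin(2,3) E(2) by (rule sum_subset_weight_Un)
  also have "\<dots> = (if {s, t} \<in> E then \<rho> else 1) * (\<Prod>v\<in>C. 1 - (1 - \<rho>) ^ card (p v))"
  proof -
    have "{s, t} \<in> X \<longleftrightarrow> {s, t} \<in> E"
      using p(3) unfolding X_def P_def by blast
    moreover have "disjoint_family_on p C"
      using disjoint_family_common_nbr_path_edges[OF G] unfolding C_def p_def .
    ultimately show ?thesis
      unfolding P_def sum_subset_weight_not_mem[OF fin(2)] using fin(4) p(2)
      by (subst sum_subset_weight_no_block_survives) (auto simp: card_ge_0_finite)
  qed
  also have "\<dots> = (if {s, t} \<in> E then \<rho> else 1) * (1 - (1 - \<rho>) ^ 2) ^ card C"
    using p(2) by simp
  finally show ?thesis
    unfolding rel_eq_1_minus_failure[OF fin(1)] rel_2_poly_def C_def by simp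
qed

lemma card_common_nbrs_le_card_vertices:
  assumes "two_terminal_graph V E s t"
  shows "card (common_nbrs E s t) \<le> card V - 2"
proof -
  have "card (common_nbrs E s t) \<le> card (V - {s, t})"
    using assms common_nbrs_subset[OF assms] unfolding two_terminal_graph_def by (intro card_mono) auto
  then show ?thesis
    using assms unfolding two_terminal_graph_def by (simp add: card_Diff_subset)
qed

lemma card_common_nbrs_le_card_edges:
  assumes G: "two_terminal_graph V E s t"
  shows "of_bool ({s, t} \<in> E) + 2 * card (common_nbrs E s t) \<le> card E"
proof -
  define C where "C = common_nbrs E s t"
  define P where "P = (\<Union>v\<in>C. {{s, v}, {v, t}})"
  have "card P = (\<Sum>v\<in>C. card {{s, v}, {v, t}})"
    unfolding P_def C_def using finite_common_nbrs[OF G] disjoint_family_common_nbr_path_edges[OF G]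
    by (intro card_UN_disjoint') auto
  also have "\<dots> = 2 * card C"
    using common_nbr_path_edges(2)[OF G] unfolding C_def by simp
  finally have "card P = 2 * card C" .
  moreover have "P \<subseteq> E" "{s, t} \<notin> P" "finite E"
    using common_nbr_path_edges[OF G] finite_edges_two_terminal_graph[OF G] unfolding P_def C_def by auto
  ultimately have "card (if {s, t} \<in> E then insert {s, t} P else P) \<le> card E"
    by (intro card_mono) auto
  then show ?thesis
    using \<open>card P = 2 * card C\<close> \<open>{s, t} \<notin> P\<close> \<open>P \<subseteq> E\<close> \<open>finite E\<close>
    unfolding C_def by (auto split: if_splits dest: finite_subset)
qed

lemma common_nbrs_if_contains_A:
  assumes G: "two_terminal_graph V E s t"
    and "contains_tt V E s t (A_verts (K + 2)) (A_edges (K + 2)) 0 1"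
  shows "{s, t} \<in> E \<and> K \<le> card (common_nbrs E s t)"
proof -
  obtain f where f: "inj_on f {0..<K + 2}" "\<forall>e\<in>A_edges (K + 2). f ` e \<in> E" "{f 0, f 1} = {s, t}"
    using assms(2) unfolding contains_tt_def A_verts_def by blast
  have "f ` {0, 1} \<in> E"
    using f(2) unfolding A_edges_def by simp
  then have "{s, t} \<in> E"
    using f(3) by simp
  have "f i \<in> common_nbrs E s t" if "i \<in> {2..<K + 2}" for i
  proof -
    have "{0, i} \<in> A_edges (K + 2)" "{i, 1} \<in> A_edges (K + 2)"
      using that unfolding A_edges_def by auto
    then have "f ` {0, i} \<in> E" "f ` {i, 1} \<in> E"
      using f(2) by blast+
    then show ?thesis
      using f(3) unfolding common_nbrs_def doubleton_eq_iff by (auto simp: insert_commute)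
  qed
  moreover have "card (f ` {2..<K + 2}) = K"
    using f(1) by (simp add: card_image inj_on_subset)
  ultimately show ?thesis
    using \<open>{s, t} \<in> E\<close> finite_common_nbrs[OF G] by (metis card_mono image_subsetI)
qed

lemma contains_A_if_common_nbrs:
  assumes G: "two_terminal_graph V E s t" and "{s, t} \<in> E" "K \<le> card (common_nbrs E s t)"
  shows "contains_tt V E s t (A_verts (K + 2)) (A_edges (K + 2)) 0 1"
proof -
  obtain g where g: "g ` {2..<K + 2} \<subseteq> common_nbrs E s t" "inj_on g {2..<K + 2}"
    using card_le_inj[of "{2..<K + 2}" "common_nbrs E s t"] finite_common_nbrs[OF G] assms(3) by auto
  define f where "f = g(0 := s, 1 := t)"
  have f01: "f 0 = s" "f 1 = t"
    unfolding f_def by simp_all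
  have nbrs: "f i \<in> common_nbrs E s t" if "i \<in> {2..<K + 2}" for i
    using that g(1) unfolding f_def by auto
  have "s \<noteq> t" "s \<in> V" "t \<in> V"
    using G unfolding two_terminal_graph_def by auto
  moreover have "f ` {2..<K + 2} \<subseteq> V - {s, t}"
    using nbrs common_nbrs_subset[OF G] by blast
  moreover have "inj_on f {2..<K + 2}"
    using g(2) unfolding f_def inj_on_def by auto
  ultimately have "inj_on f (insert 0 (insert 1 {2..<K + 2}))" "f ` insert 0 (insert 1 {2..<K + 2}) \<subseteq> V"
    using f01 by (auto simp del: atLeastLessThan_iff)
  moreover have "{0..<K + 2} = insert 0 (insert 1 {2..<K + 2})"
    by auto
  ultimately have "inj_on f {0..<K + 2}" "f ` {0..<K + 2} \<subseteq> V"
    by simp_all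
  moreover have "f ` e \<in> E" if e: "e \<in> A_edges (K + 2)" for e
  proof -
    consider "e = {0, 1}" | i where "i \<in> {2..<K + 2}" "e = {0, i} \<or> e = {i, 1}"
      using e unfolding A_edges_def by auto
    then show ?thesis
    proof cases
      case 1
      then show ?thesis using f01 assms(2) by simp
    next
      case (2 i)
      then show ?thesis using nbrs[OF 2(1)] f01 unfolding common_nbrs_def by auto
    qed
  qed
  ultimately show ?thesis
    unfolding contains_tt_def A_verts_def using f01 by blast
qed

lemma contains_A_iff:
  assumes "two_terminal_graph V E s t"
  shows "contains_tt V E s t (A_verts (K + 2)) (A_edges (K + 2)) 0 1
    \<longleftrightarrow> {s, t} \<in> E \<and> K \<le> card (common_nbrs E s t)"
  using common_nbrs_if_contains_A[OF assms] contains_A_if_common_nbrs[OF assms] by blast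

lemma two_terminal_graphI:
  assumes "finite V" "s \<in> V" "t \<in> V" "s \<noteq> t" "\<And>e. e \<in> E \<Longrightarrow> e \<subseteq> V \<and> card e = 2"
  shows "two_terminal_graph V E s t"
proof -
  have "e \<in> {{u, v} | u v. u \<in> V \<and> v \<in> V \<and> u \<noteq> v}" if e: "e \<in> E" for e
  proof -
    obtain u v where "e = {u, v}" "u \<noteq> v"
      using assms(5)[OF e] by (auto simp: card_2_iff)
    then show ?thesis
      using assms(5)[OF e] by blast
  qed
  then show ?thesis
    using assms(1-4) unfolding two_terminal_graph_def by blast
qed

lemma exists_graph_with_common_nbrs:
  assumes V: "finite V" "s \<in> V" "t \<in> V" "s \<noteq> t"
    and K: "K \<le> card V - 2" "2 * K + 1 \<le> m" and m: "m \<le> card V choose 2"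
  obtains E where "two_terminal_graph V E s t" "card E = m" "{s, t} \<in> E" "K \<le> card (common_nbrs E s t)"
proof -
  have "card (V - {s, t}) = card V - 2"
    using V by (simp add: card_Diff_subset)
  then obtain W where W: "W \<subseteq> V - {s, t}" "card W = K"
    using K(1) obtain_subset_with_card_n by metis
  then have "finite W"
    using V(1) finite_subset by blast
  define E0 where "E0 = insert {s, t} ((\<lambda>v. {s, v}) ` W \<union> (\<lambda>v. {v, t}) ` W)"
  define All where "All = {e. e \<subseteq> V \<and> card e = 2}"
  have "card E0 \<le> Suc (card ((\<lambda>v. {s, v}) ` W \<union> (\<lambda>v. {v, t}) ` W))"
    unfolding E0_def using \<open>finite W\<close> by (simp add: card_insert_if)
  also have "\<dots> \<le> Suc (card W + card W)"
    using card_Un_le card_image_le[OF \<open>finite W\<close>] by (meson Suc_le_mono add_mono le_trans)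
  also have "\<dots> \<le> m"
    using W(2) K(2) by simp
  finally have "card E0 \<le> m" .
  moreover have "E0 \<subseteq> All"
    using W(1) V unfolding E0_def All_def by (auto simp: card_insert_if subset_iff)
  moreover have "card All = card V choose 2" "finite All"
    unfolding All_def using n_subsets[OF V(1)] V(1) by simp_all
  ultimately obtain E where E: "E0 \<subseteq> E" "E \<subseteq> All" "card E = m"
    using m exists_subset_between[of E0 m All] by auto
  have "two_terminal_graph V E s t"
    using V E(2) unfolding All_def by (intro two_terminal_graphI) auto
  moreover have "W \<subseteq> common_nbrs E s t"
    using E(1) unfolding E0_def common_nbrs_def by auto
  then have "K \<le> card (common_nbrs E s t)"
    using finite_common_nbrs[OF \<open>two_terminal_graph V E s t\<close>] W(2) card_mono by metis
  moreover have "{s, t} \<in> E"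
    using E(1) unfolding E0_def by simp
  ultimately show ?thesis
    using that E(3) by blast
qed

(* This is n' - 2 in the notation of the statement (for n >= 2 and m >= 1). *)
definition max_common_nbrs :: "nat \<Rightarrow> nat \<Rightarrow> nat" where
  "max_common_nbrs n m = min ((m - 1) div 2) (n - 2)"

lemma card_common_nbrs_bound:
  assumes "two_terminal_graph V E s t"
  shows "card (common_nbrs E s t) + of_bool ({s, t} \<in> E) \<le> max_common_nbrs (card V) (card E) + 1"
  unfolding max_common_nbrs_def
proof (cases "{s, t} \<in> E")
qed (use card_common_nbrs_le_card_vertices[OF assms] card_common_nbrs_le_card_edges[OF assms] in simp)+

lemma rel_2_poly_le:
  fixes \<rho> :: real
  assumes "0 \<le> \<rho>" "\<rho> \<le> 1" "k + of_bool b \<le> K + 1"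
  shows "rel_2_poly b k \<rho> \<le> rel_2_poly True K \<rho>"
proof -
  define u where "u = 1 - (1 - \<rho>) ^ 2"
  have "(1 - \<rho>) ^ 2 \<le> 1 - \<rho>"
    unfolding power2_eq_square using assms(1,2) by (intro mult_left_le_one_le) auto
  then have u: "0 \<le> u" "u \<le> 1" "\<rho> \<le> u"
    using assms(1) unfolding u_def by auto
  have "\<rho> * u ^ K \<le> (if b then \<rho> else 1) * u ^ k"
  proof (cases b)
    case True
    then have "u ^ K \<le> u ^ k"
      using assms(3) u by (intro power_decreasing) auto
    then show ?thesis
      using True assms(1) by (simp add: mult_left_mono)
  next
    case False
    have "\<rho> * u ^ K \<le> u ^ Suc K"
      using u by (simp add: mult_right_mono)
    also have "\<dots> \<le> u ^ k"
      using False assms(3) u by (intro power_decreasing) auto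
    finally show ?thesis
      using False by simp
  qed
  then show ?thesis
    unfolding rel_2_poly_def u_def by simp
qed

lemma rel_2_poly_half_optimal:
  assumes "k + of_bool b \<le> K + 1" "rel_2_poly True K (1/2) \<le> rel_2_poly b k (1/2)"
  shows "b \<and> K \<le> k"
proof -
  have le: "(if b then 1/2 else 1) * (3/4) ^ k \<le> (1/2) * (3/4::real) ^ K"
    using assms(2) unfolding rel_2_poly_def by (simp add: power2_eq_square)
  have b
  proof (rule ccontr)
    assume "\<not> b"
    then have "(3/4::real) ^ Suc K \<le> (3/4) ^ k"
      using assms(1) by (intro power_decreasing) auto
    also have "\<dots> \<le> (1/2) * (3/4) ^ K"
      using le \<open>\<not> b\<close> by simp
    finally show False
      by simp
  qed
  then have "(3/4::real) ^ k \<le> (3/4) ^ K"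
    using le by simp
  then show ?thesis
    using \<open>b\<close> by (simp add: power_decreasing_iff)
qed

lemma UMRTTG_2_iff:
  assumes G: "two_terminal_graph V E s t" and m: "1 \<le> card E" "card E \<le> card V choose 2"
  shows "UMRTTG 2 V E s t \<longleftrightarrow>
    {s, t} \<in> E \<and> max_common_nbrs (card V) (card E) \<le> card (common_nbrs E s t)"
    (is "_ \<longleftrightarrow> _ \<and> ?K \<le> _")
proof
  assume U: "UMRTTG 2 V E s t"
  have "finite V" "s \<in> V" "t \<in> V" "s \<noteq> t"
    using G unfolding two_terminal_graph_def by auto
  moreover have "?K \<le> card V - 2" "2 * ?K + 1 \<le> card E"
    using m(1) unfolding max_common_nbrs_def by linarith+
  ultimately obtain E' where E': "two_terminal_graph V E' s t" "card E' = card E" "{s, t} \<in> E'"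
      "?K \<le> card (common_nbrs E' s t)"
    using m(2) by (rule exists_graph_with_common_nbrs)
  then have "card (common_nbrs E' s t) = ?K"
    using card_common_nbrs_bound[OF E'(1)] by simp
  have "rel 2 E' s t (1/2) \<le> rel 2 E s t (1/2)"
    using U E'(1,2) unfolding UMRTTG_def by simp
  then have "rel_2_poly True ?K (1/2) \<le> rel_2_poly ({s, t} \<in> E) (card (common_nbrs E s t)) (1/2)"
    unfolding rel_2_eq[OF E'(1)] rel_2_eq[OF G] using E'(3) \<open>card (common_nbrs E' s t) = ?K\<close> by simp
  then show "{s, t} \<in> E \<and> ?K \<le> card (common_nbrs E s t)"
    using card_common_nbrs_bound[OF G] by (intro rel_2_poly_half_optimal)
next
  assume "{s, t} \<in> E \<and> ?K \<le> card (common_nbrs E s t)"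
  then have opt: "{s, t} \<in> E" "card (common_nbrs E s t) = ?K"
    using card_common_nbrs_bound[OF G] by auto
  show "UMRTTG 2 V E s t"
    unfolding UMRTTG_def
  proof (intro allI impI, elim conjE)
    fix V' :: "'a set" and E' s' t' and \<rho> :: real
    assume H: "two_terminal_graph V' E' s' t'" "card V' = card V" "card E' = card E" "0 \<le> \<rho>" "\<rho> \<le> 1"
    have "card (common_nbrs E' s' t') + of_bool ({s', t'} \<in> E') \<le> ?K + 1"
      using card_common_nbrs_bound[OF H(1)] H(2,3) by simp
    then show "rel 2 E' s' t' \<rho> \<le> rel 2 E s t \<rho>"
      unfolding rel_2_eq[OF H(1)] rel_2_eq[OF G] using opt H(4,5) by (simp add: rel_2_poly_le)
  qed
qed

theorem proposition1:
  fixes V :: "'a set" and E :: "'a set set" and s t :: 'a and n m :: nat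
  assumes "two_terminal_graph V E s t"
    and "card V = n" and "card E = m"
    and "n \<ge> 2" and "1 \<le> m" and "m \<le> n choose 2"
  shows "UMRTTG 2 V E s t \<longleftrightarrow>
    contains_tt V E s t (A_verts (min ((m + 3) div 2) n)) (A_edges (min ((m + 3) div 2) n)) 0 1"
proof -
  have "min ((m + 3) div 2) n = max_common_nbrs n m + 2"
    unfolding max_common_nbrs_def using assms(4,5) by linarith
  then show ?thesis
    using UMRTTG_2_iff[OF assms(1)] contains_A_iff[OF assms(1)] assms(2,3,5,6) by simp
qed

end
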